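(* Let $n\ge2$ be even. Then every $n$-Gumm variety and every doubly defective $n$-alvin variety is $(2n-3)$-reversed-modular when $n\ge4$ (hence $(2n-2)$-modular). Moreover this is optimal: for every even $n\ge2$ there is a locally finite variety which is doubly defective $n$-alvin, and in fact $n$-Gumm, but is not $(2n-3)$-modular.
   Context: Alvin equations for ternary $t_0,\dots,t_n$: $t_0(x,y,z)=x$, $t_n(x,y,z)=z$, $t_h(x,y,x)=x$ for $0\le h\le n$, $t_h(x,z,z)=t_{h+1}(x,z,z)$ for even $h$, $t_h(x,x,z)=t_{h+1}(x,x,z)$ for odd $h$ ($0\le h<n$). Gumm terms: all alvin equations except $t_1(x,y,x)=x$. Doubly defective alvin terms: all alvin equations except $t_1(x,y,x)=x$ and $t_{n-1}(x,y,x)=x$. A variety is $n$-Gumm (doubly defective $n$-alvin) if it has such terms $t_0,\dots,t_n$. Day terms: $4$-ary $u_0,\dots,u_m$ with $u_k(x,y,y,x)=x$ for all $k$, $u_0(x,y,z,w)=x$, $u_m(x,y,z,w)=w$, $u_k(x,x,w,w)=u_{k+1}(x,x,w,w)$ for even $k$, $u_k(x,y,y,w)=u_{k+1}(x,y,y,w)$ for odd $k$; reversed Day terms: even/odd exchanged in the last two. $m$-modular ($m$-reversed-modular): having Day (reversed Day) terms $u_0,\dots,u_m$. *)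

theory Defs
  imports Main
begin

datatype 'f trm = Var nat | Fun 'f "'f trm list"

fun wf_trm :: "('f \<Rightarrow> nat) \<Rightarrow> 'f trm \<Rightarrow> bool" where
  "wf_trm ar (Var v) = True"
| "wf_trm ar (Fun f ts) = (length ts = ar f \<and> (\<forall>t\<in>set ts. wf_trm ar t))"

fun vars_trm :: "'f trm \<Rightarrow> nat set" where
  "vars_trm (Var v) = {v}"
| "vars_trm (Fun f ts) = (\<Union>t\<in>set ts. vars_trm t)"

fun subst :: "(nat \<Rightarrow> 'f trm) \<Rightarrow> 'f trm \<Rightarrow> 'f trm" where
  "subst \<sigma> (Var v) = \<sigma> v"
| "subst \<sigma> (Fun f ts) = Fun f (map (subst \<sigma>) ts)"

text \<open>A variety is presented by a set of identities Sigma (pairs of well-formed terms);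
  the variety is Mod(Sigma).  An identity holds in the variety iff it is an equational
  consequence of Sigma (Birkhoff's completeness theorem); we use the standard rules of
  equational logic.\<close>

definition equational_theory :: "('f \<Rightarrow> nat) \<Rightarrow> ('f trm \<times> 'f trm) set \<Rightarrow> bool" where
  "equational_theory ar \<Sigma> \<longleftrightarrow> (\<forall>(s,t)\<in>\<Sigma>. wf_trm ar s \<and> wf_trm ar t)"

inductive eqc :: "('f \<Rightarrow> nat) \<Rightarrow> ('f trm \<times> 'f trm) set \<Rightarrow> 'f trm \<Rightarrow> 'f trm \<Rightarrow> bool"
  for ar \<Sigma> where
  ax: "(s, t) \<in> \<Sigma> \<Longrightarrow> (\<forall>i. wf_trm ar (\<sigma> i)) \<Longrightarrow> eqc ar \<Sigma> (subst \<sigma> s) (subst \<sigma> t)"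
| refl: "wf_trm ar t \<Longrightarrow> eqc ar \<Sigma> t t"
| sym: "eqc ar \<Sigma> s t \<Longrightarrow> eqc ar \<Sigma> t s"
| trans: "eqc ar \<Sigma> s t \<Longrightarrow> eqc ar \<Sigma> t u \<Longrightarrow> eqc ar \<Sigma> s u"
| cong: "length ss = ar f \<Longrightarrow> length ts = length ss \<Longrightarrow>
         (\<forall>i<length ss. eqc ar \<Sigma> (ss ! i) (ts ! i)) \<Longrightarrow> eqc ar \<Sigma> (Fun f ss) (Fun f ts)"

abbreviation "vx \<equiv> Var 0"
abbreviation "vy \<equiv> Var 1"
abbreviation "vz \<equiv> Var 2"
abbreviation "vw \<equiv> Var 3"

definition kary :: "('f \<Rightarrow> nat) \<Rightarrow> nat \<Rightarrow> 'f trm \<Rightarrow> bool" where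
  "kary ar k t \<longleftrightarrow> wf_trm ar t \<and> vars_trm t \<subseteq> {..<k}"

definition app3 :: "'f trm \<Rightarrow> 'f trm \<Rightarrow> 'f trm \<Rightarrow> 'f trm \<Rightarrow> 'f trm" where
  "app3 t a b c = subst (\<lambda>i. if i = 0 then a else if i = 1 then b else c) t"

definition app4 :: "'f trm \<Rightarrow> 'f trm \<Rightarrow> 'f trm \<Rightarrow> 'f trm \<Rightarrow> 'f trm \<Rightarrow> 'f trm" where
  "app4 u a b c d = subst (\<lambda>i. if i = 0 then a else if i = 1 then b else if i = 2 then c else d) u"

definition alvin_terms_except ::
  "('f \<Rightarrow> nat) \<Rightarrow> ('f trm \<times> 'f trm) set \<Rightarrow> nat \<Rightarrow> nat set \<Rightarrow> (nat \<Rightarrow> 'f trm) \<Rightarrow> bool" where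
  "alvin_terms_except ar \<Sigma> n E t \<longleftrightarrow>
     (\<forall>h\<le>n. kary ar 3 (t h)) \<and>
     eqc ar \<Sigma> (app3 (t 0) vx vy vz) vx \<and>
     eqc ar \<Sigma> (app3 (t n) vx vy vz) vz \<and>
     (\<forall>h\<le>n. h \<notin> E \<longrightarrow> eqc ar \<Sigma> (app3 (t h) vx vy vx) vx) \<and>
     (\<forall>h<n. even h \<longrightarrow> eqc ar \<Sigma> (app3 (t h) vx vz vz) (app3 (t (h+1)) vx vz vz)) \<and>
     (\<forall>h<n. odd h \<longrightarrow> eqc ar \<Sigma> (app3 (t h) vx vx vz) (app3 (t (h+1)) vx vx vz))"

definition n_gumm :: "('f \<Rightarrow> nat) \<Rightarrow> ('f trm \<times> 'f trm) set \<Rightarrow> nat \<Rightarrow> bool" where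
  "n_gumm ar \<Sigma> n \<longleftrightarrow> (\<exists>t. alvin_terms_except ar \<Sigma> n {1} t)"

definition dd_alvin :: "('f \<Rightarrow> nat) \<Rightarrow> ('f trm \<times> 'f trm) set \<Rightarrow> nat \<Rightarrow> bool" where
  "dd_alvin ar \<Sigma> n \<longleftrightarrow> (\<exists>t. alvin_terms_except ar \<Sigma> n {1, n - 1} t)"

text \<open>Day terms (rv = False) and reversed Day terms (rv = True).\<close>
definition day_terms ::
  "('f \<Rightarrow> nat) \<Rightarrow> ('f trm \<times> 'f trm) set \<Rightarrow> bool \<Rightarrow> nat \<Rightarrow> (nat \<Rightarrow> 'f trm) \<Rightarrow> bool" where
  "day_terms ar \<Sigma> rv m u \<longleftrightarrow>
     (\<forall>k\<le>m. kary ar 4 (u k)) \<and>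
     (\<forall>k\<le>m. eqc ar \<Sigma> (app4 (u k) vx vy vy vx) vx) \<and>
     eqc ar \<Sigma> (app4 (u 0) vx vy vz vw) vx \<and>
     eqc ar \<Sigma> (app4 (u m) vx vy vz vw) vw \<and>
     (\<forall>k<m. (even k \<noteq> rv) \<longrightarrow> eqc ar \<Sigma> (app4 (u k) vx vx vw vw) (app4 (u (k+1)) vx vx vw vw)) \<and>
     (\<forall>k<m. (odd k \<noteq> rv) \<longrightarrow> eqc ar \<Sigma> (app4 (u k) vx vy vy vw) (app4 (u (k+1)) vx vy vy vw))"

definition modular :: "('f \<Rightarrow> nat) \<Rightarrow> ('f trm \<times> 'f trm) set \<Rightarrow> nat \<Rightarrow> bool" where
  "modular ar \<Sigma> m \<longleftrightarrow> (\<exists>u. day_terms ar \<Sigma> False m u)"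

definition reversed_modular :: "('f \<Rightarrow> nat) \<Rightarrow> ('f trm \<times> 'f trm) set \<Rightarrow> nat \<Rightarrow> bool" where
  "reversed_modular ar \<Sigma> m \<longleftrightarrow> (\<exists>u. day_terms ar \<Sigma> True m u)"

text \<open>Locally finite: every free algebra on finitely many (k) generators is finite,
  i.e. finitely many k-ary terms modulo the equational theory.\<close>
definition locally_finite :: "('f \<Rightarrow> nat) \<Rightarrow> ('f trm \<times> 'f trm) set \<Rightarrow> bool" where
  "locally_finite ar \<Sigma> \<longleftrightarrow>
     (\<forall>k. finite ((\<lambda>t. {s. kary ar k s \<and> eqc ar \<Sigma> s t}) ` {t. kary ar k t}))"

end

theory Submission
  imports Defs "HOL-Library.FuncSet"
begin

text \<open>Doubly defective alvin terms \<open>t\<^sub>0, \<dots>, t\<^sub>n\<close> yield reversed Day terms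
  \<open>u\<^sub>0, \<dots>, u\<^sub>2\<^sub>n\<^sub>-\<^sub>3\<close>: the interior terms are the pairs \<open>t\<^sub>h(x,y,w), t\<^sub>h(x,z,w)\<close>
  for \<open>2 \<le> h \<le> n - 2\<close>, and the ends \<open>t\<^sub>1(x,y,z)\<close>, \<open>t\<^sub>n\<^sub>-\<^sub>1(y,z,w)\<close> satisfy
  \<open>u(x,y,y,x) = x\<close> by \<open>t\<^sub>1(x,y,y) = x\<close> and \<open>t\<^sub>n\<^sub>-\<^sub>1(x,x,y) = y\<close>. Prepending \<open>x\<close> turns reversed Day terms into Day terms.

  For optimality, take the finite algebra \<open>W\<^sub>n\<close> made of a two-element block \<open>{A, B}\<close>, a chain
  \<open>V 0 < \<dots> < V (n - 1)\<close> and a chain \<open>E 1 < \<dots> < E (n - 1)\<close> with an extra element \<open>F\<close>,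
  whose operations are Gumm operations. The ternary relation
  \<open>R = {(A, V i, E j) | i \<le> j \<le> i + 1} \<union> {(B, V i, F)}\<close> is compatible with \<open>W\<^sub>n\<close>.
  Evaluating Day terms \<open>u\<^sub>k\<close> on the rows \<open>(A,B,B,A)\<close>, \<open>(V 0, V 0, V (n-1), V (n-1))\<close> and
  \<open>(E 1, F, F, E (n-1))\<close> gives triples \<open>(A, V i\<^sub>k, E j\<^sub>k) \<in> R\<close> where \<open>i\<^sub>k\<close> only changes
  at odd \<open>k\<close> and \<open>j\<^sub>k\<close> only at even \<open>k\<close>. So \<open>i\<^sub>k\<close> grows by at most one every two steps
  and cannot climb from \<open>0\<close> to \<open>n - 1\<close> in \<open>2n - 3\<close> steps.\<close>

section \<open>Substitution and instances of terms\<close>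

lemma subst_subst: "subst \<sigma> (subst \<tau> t) = subst (\<lambda>i. subst \<sigma> (\<tau> i)) t"
  by (induction t) auto

lemma subst_Var: "subst Var t = t"
  by (induction t) (auto simp: map_idI)

lemma wf_trm_subst: "wf_trm ar t \<Longrightarrow> (\<And>i. wf_trm ar (\<sigma> i)) \<Longrightarrow> wf_trm ar (subst \<sigma> t)"
  by (induction t) auto

lemma vars_trm_subst: "vars_trm (subst \<sigma> t) = (\<Union>i\<in>vars_trm t. vars_trm (\<sigma> i))"
  by (induction t) auto

lemma eqc_subst:
  assumes "eqc ar \<Sigma> s t" "\<And>i. wf_trm ar (\<sigma> i)"
  shows "eqc ar \<Sigma> (subst \<sigma> s) (subst \<sigma> t)"
  using assms
proof (induction rule: eqc.induct)
  case (ax s t \<tau>)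
  have "eqc ar \<Sigma> (subst (\<lambda>i. subst \<sigma> (\<tau> i)) s) (subst (\<lambda>i. subst \<sigma> (\<tau> i)) t)"
    using ax by (intro eqc.ax) (auto intro: wf_trm_subst)
  then show ?case by (simp add: subst_subst)
next
  case (refl t)
  then show ?case by (auto intro: eqc.refl wf_trm_subst)
qed (auto intro: eqc.sym eqc.trans eqc.cong)

lemma eqc_Var [simp]: "eqc ar \<Sigma> (Var i) (Var i)"
  by (simp add: eqc.refl)

definition args3 :: "'a \<Rightarrow> 'a \<Rightarrow> 'a \<Rightarrow> nat \<Rightarrow> 'a" where
  "args3 a b c = (\<lambda>i. if i = 0 then a else if i = 1 then b else c)"

definition args4 :: "'a \<Rightarrow> 'a \<Rightarrow> 'a \<Rightarrow> 'a \<Rightarrow> nat \<Rightarrow> 'a" where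
  "args4 a b c d = (\<lambda>i. if i = 0 then a else if i = 1 then b else if i = 2 then c else d)"

lemma app3_eq_subst: "app3 T a b c = subst (args3 a b c) T"
  by (simp add: app3_def args3_def)

lemma app4_eq_subst: "app4 T a b c d = subst (args4 a b c d) T"
  by (simp add: app4_def args4_def)

lemma app3_Var [simp]: "app3 (Var i) a b c = (if i = 0 then a else if i = 1 then b else c)"
  by (simp add: app3_def)

lemma app4_Var [simp]:
  "app4 (Var i) a b c d = (if i = 0 then a else if i = 1 then b else if i = 2 then c else d)"
  by (simp add: app4_def)

lemma subst_app3: "subst \<sigma> (app3 T a b c) = app3 T (subst \<sigma> a) (subst \<sigma> b) (subst \<sigma> c)"
  unfolding app3_eq_subst subst_subst
  by (auto simp: args3_def intro!: arg_cong[where f="\<lambda>g. subst g T"])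

lemma subst_app4:
  "subst \<sigma> (app4 T a b c d) = app4 T (subst \<sigma> a) (subst \<sigma> b) (subst \<sigma> c) (subst \<sigma> d)"
  unfolding app4_eq_subst subst_subst
  by (auto simp: args4_def intro!: arg_cong[where f="\<lambda>g. subst g T"])

lemma app3_app3 [simp]:
  "app3 (app3 T p q r) a b c = app3 T (app3 p a b c) (app3 q a b c) (app3 r a b c)"
  unfolding app3_eq_subst[of "app3 T p q r"] by (simp add: subst_app3 flip: app3_eq_subst)

lemma app4_app3 [simp]:
  "app4 (app3 T p q r) a b c d = app3 T (app4 p a b c d) (app4 q a b c d) (app4 r a b c d)"
  unfolding app4_eq_subst[of "app3 T p q r"] by (simp add: subst_app3 flip: app4_eq_subst)

lemma eqc_app3:
  assumes "eqc ar \<Sigma> s s'" "wf_trm ar a" "wf_trm ar b" "wf_trm ar c"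
  shows "eqc ar \<Sigma> (app3 s a b c) (app3 s' a b c)"
  unfolding app3_eq_subst using assms by (intro eqc_subst) (auto simp: args3_def)

lemma kary_Var: "i < k \<Longrightarrow> kary ar k (Var i)"
  by (simp add: kary_def)

lemma kary_app3:
  assumes "kary ar 3 T" "kary ar k a" "kary ar k b" "kary ar k c"
  shows "kary ar k (app3 T a b c)"
  using assms
  by (auto simp: kary_def app3_eq_subst vars_trm_subst args3_def intro!: wf_trm_subst
      split: if_splits)

section \<open>Reversed Day terms from doubly defective alvin terms\<close>

lemma alvin_terms_except_mono:
  "alvin_terms_except ar \<Sigma> n E t \<Longrightarrow> E \<subseteq> E' \<Longrightarrow> alvin_terms_except ar \<Sigma> n E' t"
  by (auto simp: alvin_terms_except_def)

lemma n_gumm_imp_dd_alvin: "n_gumm ar \<Sigma> n \<Longrightarrow> dd_alvin ar \<Sigma> n"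
  unfolding n_gumm_def dd_alvin_def by (blast intro: alvin_terms_except_mono)

text \<open>For \<open>1 \<le> j \<le> n - 3\<close>, \<open>u\<^sub>2\<^sub>j\<close> and \<open>u\<^sub>2\<^sub>j\<^sub>+\<^sub>1\<close> are \<open>t\<^sub>j\<^sub>+\<^sub>1(x,y,w)\<close> and
  \<open>t\<^sub>j\<^sub>+\<^sub>1(x,z,w)\<close>, in an order depending on the parity of \<open>j\<close>.\<close>
definition rev_day_trm :: "(nat \<Rightarrow> 'f trm) \<Rightarrow> nat \<Rightarrow> nat \<Rightarrow> 'f trm" where
  "rev_day_trm t n k =
     (if k = 0 then vx
      else if k = 1 then app3 (t 1) vx vy vz
      else if k = 2 * n - 4 then app3 (t (n - 1)) vy vz vw
      else if k = 2 * n - 3 then vw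
      else app3 (t (k div 2 + 1)) vx (if even k = even (k div 2 + 1) then vy else vz) vw)"

lemma rev_day_trm_0: "rev_day_trm t n 0 = vx"
  by (simp add: rev_day_trm_def)

lemma rev_day_trm_1:
  assumes "3 \<le> n"
  shows "rev_day_trm t n (Suc 0) = app3 (t (Suc 0)) vx vy vz"
proof -
  have "Suc 0 \<noteq> 2 * n - 4" using assms by linarith
  then show ?thesis by (simp add: rev_day_trm_def)
qed

lemma rev_day_trm_penult:
  assumes "3 \<le> n"
  shows "rev_day_trm t n (2 * n - 4) = app3 (t (n - 1)) vy vz vw"
proof -
  have "2 * n - 4 \<noteq> Suc 0" using assms by linarith
  with assms show ?thesis by (simp add: rev_day_trm_def)
qed

lemma rev_day_trm_last:
  assumes "3 \<le> n"
  shows "rev_day_trm t n (2 * n - 3) = vw"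
proof -
  have "2 * n - 3 \<noteq> 2 * n - 4" "2 * n - 3 \<noteq> Suc 0" using assms by linarith+
  then show ?thesis by (simp add: rev_day_trm_def)
qed

lemma rev_day_trm_mid:
  assumes "2 \<le> k" "k + 5 \<le> 2 * n"
  shows "rev_day_trm t n k =
           app3 (t (k div 2 + 1)) vx (if even k = even (k div 2 + 1) then vy else vz) vw"
proof -
  have "k \<noteq> 2 * n - 4" "k \<noteq> 2 * n - 3" using assms by linarith+
  then show ?thesis using assms by (simp add: rev_day_trm_def)
qed

lemma rev_day_trm_even:
  "1 \<le> j \<Longrightarrow> j + 3 \<le> n \<Longrightarrow>
    rev_day_trm t n (2 * j) = app3 (t (Suc j)) vx (if odd j then vy else vz) vw"
  using rev_day_trm_mid[of "2 * j" n t] by simp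

lemma rev_day_trm_odd:
  "1 \<le> j \<Longrightarrow> j + 3 \<le> n \<Longrightarrow>
    rev_day_trm t n (Suc (2 * j)) = app3 (t (Suc j)) vx (if even j then vy else vz) vw"
  using rev_day_trm_mid[of "Suc (2 * j)" n t] by simp

locale dd_alvin_terms =
  fixes ar :: "'f \<Rightarrow> nat" and \<Sigma> :: "('f trm \<times> 'f trm) set" and n :: nat and t :: "nat \<Rightarrow> 'f trm"
  assumes alvin: "alvin_terms_except ar \<Sigma> n {1, n - 1} t"
    and even_n: "even n" and four_le_n: "4 \<le> n"
begin

lemma t_kary: "h \<le> n \<Longrightarrow> kary ar 3 (t h)"
  using alvin by (simp add: alvin_terms_except_def)

lemma t_absorb:
  assumes "h \<le> n" "h \<noteq> 1" "h \<noteq> n - 1" "wf_trm ar a" "wf_trm ar b"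
  shows "eqc ar \<Sigma> (app3 (t h) a b a) a"
proof -
  have "eqc ar \<Sigma> (app3 (t h) vx vy vx) vx"
    using alvin assms(1-3) by (simp add: alvin_terms_except_def)
  from eqc_app3[OF this assms(4,5,4)] show ?thesis by simp
qed

lemma t_link_even:
  assumes "h < n" "even h" "wf_trm ar a" "wf_trm ar b"
  shows "eqc ar \<Sigma> (app3 (t h) a b b) (app3 (t (Suc h)) a b b)"
proof -
  have "eqc ar \<Sigma> (app3 (t h) vx vz vz) (app3 (t (Suc h)) vx vz vz)"
    using alvin assms(1,2) by (simp add: alvin_terms_except_def)
  from eqc_app3[OF this assms(3,3,4)] show ?thesis by simp
qed

lemma t_link_odd:
  assumes "h < n" "odd h" "wf_trm ar a" "wf_trm ar b"
  shows "eqc ar \<Sigma> (app3 (t h) a a b) (app3 (t (Suc h)) a a b)"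
proof -
  have "eqc ar \<Sigma> (app3 (t h) vx vx vz) (app3 (t (Suc h)) vx vx vz)"
    using alvin assms(1,2) by (simp add: alvin_terms_except_def)
  from eqc_app3[OF this assms(3,3,4)] show ?thesis by simp
qed

lemma t_1_left:
  assumes "wf_trm ar a" "wf_trm ar b"
  shows "eqc ar \<Sigma> (app3 (t 1) a b b) a"
proof -
  have "eqc ar \<Sigma> (app3 (t 0) vx vy vz) vx"
    using alvin by (simp add: alvin_terms_except_def)
  from eqc_app3[OF this assms(1,2,2)] have "eqc ar \<Sigma> (app3 (t 0) a b b) a" by simp
  moreover have "eqc ar \<Sigma> (app3 (t 0) a b b) (app3 (t 1) a b b)"
    using t_link_even[of 0 a b] assms four_le_n by simp
  ultimately show ?thesis by (blast intro: eqc.sym eqc.trans)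
qed

lemma t_pred_n_right:
  assumes "wf_trm ar a" "wf_trm ar b"
  shows "eqc ar \<Sigma> (app3 (t (n - 1)) a a b) b"
proof -
  have "eqc ar \<Sigma> (app3 (t n) vx vy vz) vz"
    using alvin by (simp add: alvin_terms_except_def)
  from eqc_app3[OF this assms(1,1,2)] have "eqc ar \<Sigma> (app3 (t n) a a b) b" by simp
  moreover have "eqc ar \<Sigma> (app3 (t (n - 1)) a a b) (app3 (t n) a a b)"
    using t_link_odd[of "n - 1" a b] assms even_n four_le_n by simp
  ultimately show ?thesis by (blast intro: eqc.trans)
qed

lemma rev_day_trm_cases:
  assumes "k \<le> 2 * n - 3"
  obtains "k = 0" | "k = 1" | "k = 2 * n - 4" | "k = 2 * n - 3" | "2 \<le> k" "k + 5 \<le> 2 * n"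
  using assms four_le_n by linarith

lemma rev_day_trm_kary:
  assumes "k \<le> 2 * n - 3"
  shows "kary ar 4 (rev_day_trm t n k)"
  using assms
proof (cases rule: rev_day_trm_cases)
  case 5
  then show ?thesis by (simp add: rev_day_trm_mid kary_app3 t_kary kary_Var)
qed (use four_le_n in \<open>simp_all add: rev_day_trm_0 rev_day_trm_1 rev_day_trm_penult
        rev_day_trm_last kary_app3 t_kary kary_Var\<close>)

lemma rev_day_trm_absorb:
  assumes "k \<le> 2 * n - 3"
  shows "eqc ar \<Sigma> (app4 (rev_day_trm t n k) vx vy vy vx) vx"
  using assms
proof (cases rule: rev_day_trm_cases)
  case 2
  then show ?thesis using t_1_left[of vx vy] four_le_n by (simp add: rev_day_trm_1)
next
  case 3
  then show ?thesis using t_pred_n_right[of vy vx] four_le_n by (simp add: rev_day_trm_penult)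
next
  case 5
  then show ?thesis using t_absorb[of "k div 2 + 1" vx vy] by (simp add: rev_day_trm_mid)
qed (use four_le_n in \<open>simp_all add: rev_day_trm_0 rev_day_trm_last\<close>)

lemma rev_day_trm_link_odd:
  assumes "k < 2 * n - 3" "odd k"
  shows "eqc ar \<Sigma> (app4 (rev_day_trm t n k) vx vx vw vw)
                  (app4 (rev_day_trm t n (Suc k)) vx vx vw vw)"
proof -
  obtain j where k: "k = Suc (2 * j)" using assms(2) oddE by fastforce
  consider "j = 0" | "j + 3 = n" | "1 \<le> j" "j + 4 \<le> n"
    using assms(1) k by linarith
  then show ?thesis
  proof cases
    case 1
    then show ?thesis
      using t_link_odd[of 1 vx vw] k four_le_n rev_day_trm_even[of 1 n t]
      by (simp add: rev_day_trm_1 numeral_eq_Suc)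
  next
    case 2
    then have "odd j" "Suc k = 2 * n - 4" "n - 1 = Suc (Suc j)" using even_n k by presburger+
    then show ?thesis
      using t_link_even[of "Suc j" vx vw] k 2 four_le_n rev_day_trm_odd[of j n t]
      by (simp add: rev_day_trm_penult)
  next
    case 3
    have "Suc k = 2 * Suc j" using k by simp
    then show ?thesis
      using t_link_odd[of "Suc j" vx vw] t_link_even[of "Suc j" vx vw] k 3
        rev_day_trm_odd[of j n t] rev_day_trm_even[of "Suc j" n t]
      by (cases "even j") simp_all
  qed
qed

lemma rev_day_trm_link_even:
  assumes "k < 2 * n - 3" "even k"
  shows "eqc ar \<Sigma> (app4 (rev_day_trm t n k) vx vy vy vw)
                  (app4 (rev_day_trm t n (Suc k)) vx vy vy vw)"
proof -
  obtain j where k: "k = 2 * j" using assms(2) by blast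
  consider "j = 0" | "j + 2 = n" | "1 \<le> j" "j + 3 \<le> n"
    using assms(1) k by linarith
  then show ?thesis
  proof cases
    case 1
    then show ?thesis
      using t_1_left[of vx vy] k four_le_n by (simp add: rev_day_trm_0 rev_day_trm_1 eqc.sym)
  next
    case 2
    then have "k = 2 * n - 4" "Suc k = 2 * n - 3" using k by simp_all
    then show ?thesis
      using t_pred_n_right[of vy vw] four_le_n by (simp add: rev_day_trm_penult rev_day_trm_last)
  next
    case 3
    have "kary ar 4 (app3 (t (Suc j)) vx vy vw)"
      using 3 by (simp add: kary_app3 t_kary kary_Var)
    then show ?thesis using k 3 rev_day_trm_even[of j n t] rev_day_trm_odd[of j n t]
      by (simp add: eqc.refl kary_def)
  qed
qed

lemma reversed_day_terms: "day_terms ar \<Sigma> True (2 * n - 3) (rev_day_trm t n)"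
  unfolding day_terms_def
  using rev_day_trm_kary rev_day_trm_absorb rev_day_trm_link_odd rev_day_trm_link_even four_le_n
  by (simp add: rev_day_trm_0 rev_day_trm_last)

end

lemma dd_alvin_imp_reversed_modular:
  assumes "dd_alvin ar \<Sigma> n" "even n" "4 \<le> n"
  shows "reversed_modular ar \<Sigma> (2 * n - 3)"
proof -
  obtain t where "alvin_terms_except ar \<Sigma> n {1, n - 1} t"
    using assms(1) by (auto simp: dd_alvin_def)
  then interpret dd_alvin_terms ar \<Sigma> n t
    using assms(2,3) by unfold_locales
  show ?thesis using reversed_day_terms by (auto simp: reversed_modular_def)
qed

lemma day_terms_of_reversed:
  assumes "day_terms ar \<Sigma> True m u"
  shows "day_terms ar \<Sigma> False (Suc m) (\<lambda>k. if k = 0 then vx else u (k - 1))"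
proof -
  have "eqc ar \<Sigma> (app4 (u 0) vx vy vz vw) vx"
    using assms by (simp add: day_terms_def)
  from eqc_subst[OF this, of "args4 vx vx vw vw"]
  have "eqc ar \<Sigma> (app4 (u 0) vx vx vw vw) vx"
    by (simp add: subst_app4 args4_def)
  then have "eqc ar \<Sigma> vx (app4 (u 0) vx vx vw vw)"
    by (rule eqc.sym)
  with assms show ?thesis
    unfolding day_terms_def by (auto simp: kary_def less_Suc_eq_0_disj)
qed

lemma reversed_modular_imp_modular: "reversed_modular ar \<Sigma> m \<Longrightarrow> modular ar \<Sigma> (Suc m)"
  unfolding reversed_modular_def modular_def by (blast dest: day_terms_of_reversed)

section \<open>The witness algebra\<close>

text \<open>On a chain, \<open>chain_op a c m m'\<close> moves from \<open>a\<close> towards \<open>c\<close>, stopping at the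
  threshold \<open>m\<close> when going up and at \<open>m'\<close> when going down.\<close>

definition chain_op :: "int \<Rightarrow> int \<Rightarrow> int \<Rightarrow> int \<Rightarrow> int" where
  "chain_op a c m m' = (if a = c then a else if a < c then max a (min c m) else min a (max c m'))"

definition up_V :: "nat \<Rightarrow> int \<Rightarrow> int" where
  "up_V h b = (if (b < int h) = even h then int h - 1 else int h)"

definition down_V :: "nat \<Rightarrow> nat \<Rightarrow> int \<Rightarrow> int" where
  "down_V n h b = (if (int n - 1 - int h < b) = even h then int n - int h else int n - 1 - int h)"

definition up_E :: "nat \<Rightarrow> int \<Rightarrow> int" where
  "up_E h b = (if even h then max (int h - 1) (min b (int h + 1)) else int h)"

definition down_E :: "nat \<Rightarrow> nat \<Rightarrow> int \<Rightarrow> int" where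
  "down_E n h b =
     (if even h then min (int n - int h + 1) (max b (int n - int h - 1)) else int n - int h)"

definition opV :: "nat \<Rightarrow> nat \<Rightarrow> int \<Rightarrow> int \<Rightarrow> int \<Rightarrow> int" where
  "opV n h a b c = chain_op a c (up_V h b) (down_V n h b)"

definition opE :: "nat \<Rightarrow> nat \<Rightarrow> int \<Rightarrow> int \<Rightarrow> int \<Rightarrow> int" where
  "opE n h a b c = chain_op a c (up_E h b) (down_E n h b)"

definition opF :: "nat \<Rightarrow> nat \<Rightarrow> int \<Rightarrow> int \<Rightarrow> int" where
  "opF n h a c = chain_op a c (int h) (int n - int h)"

lemma chain_op_same [simp]: "chain_op a a m m' = a"
  by (simp add: chain_op_def)

lemma chain_op_range:
  "lo \<le> a \<Longrightarrow> lo \<le> c \<Longrightarrow> a < hi \<Longrightarrow> c < hi \<Longrightarrow>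
    lo \<le> chain_op a c m m' \<and> chain_op a c m m' < hi"
  by (auto simp: chain_op_def)

lemma opV_range: "0 \<le> a \<Longrightarrow> 0 \<le> c \<Longrightarrow> a < int n \<Longrightarrow> c < int n \<Longrightarrow> 0 \<le> opV n h a b c \<and> opV n h a b c < int n"
  unfolding opV_def by (rule chain_op_range)

lemma opE_range: "1 \<le> a \<Longrightarrow> 1 \<le> c \<Longrightarrow> a < int n \<Longrightarrow> c < int n \<Longrightarrow> 1 \<le> opE n h a b c \<and> opE n h a b c < int n"
  unfolding opE_def by (rule chain_op_range)

lemma opF_range: "1 \<le> a \<Longrightarrow> 1 \<le> c \<Longrightarrow> a < int n \<Longrightarrow> c < int n \<Longrightarrow> 1 \<le> opF n h a c \<and> opF n h a c < int n"
  unfolding opF_def by (rule chain_op_range)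

lemma opV_1_left: "0 \<le> a \<Longrightarrow> 0 \<le> c \<Longrightarrow> a < int n \<Longrightarrow> c < int n \<Longrightarrow> opV n (Suc 0) a c c = a"
  by (auto simp: opV_def chain_op_def up_V_def down_V_def)

lemma opV_link_even:
  "even h \<Longrightarrow> 2 \<le> h \<Longrightarrow> h + 2 \<le> n \<Longrightarrow> 0 \<le> a \<Longrightarrow> 0 \<le> c \<Longrightarrow> a < int n \<Longrightarrow> c < int n \<Longrightarrow>
    opV n h a c c = opV n (Suc h) a c c"
  by (auto simp: opV_def chain_op_def up_V_def down_V_def)

lemma opV_link_odd:
  "odd h \<Longrightarrow> h + 3 \<le> n \<Longrightarrow> 0 \<le> a \<Longrightarrow> 0 \<le> c \<Longrightarrow> a < int n \<Longrightarrow> c < int n \<Longrightarrow>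
    opV n h a a c = opV n (Suc h) a a c"
  by (auto simp: opV_def chain_op_def up_V_def down_V_def)

lemma opV_pred_n_right:
  "even n \<Longrightarrow> 2 \<le> n \<Longrightarrow> 0 \<le> a \<Longrightarrow> 0 \<le> c \<Longrightarrow> a < int n \<Longrightarrow> c < int n \<Longrightarrow>
    opV n (n - Suc 0) a a c = c"
  by (auto simp: opV_def chain_op_def up_V_def down_V_def)

lemma opE_1_left: "1 \<le> a \<Longrightarrow> 1 \<le> c \<Longrightarrow> a < int n \<Longrightarrow> c < int n \<Longrightarrow> opE n (Suc 0) a c c = a"
  by (auto simp: opE_def chain_op_def up_E_def down_E_def)

lemma opE_link_even:
  "even h \<Longrightarrow> 2 \<le> h \<Longrightarrow> h + 2 \<le> n \<Longrightarrow> 1 \<le> a \<Longrightarrow> 1 \<le> c \<Longrightarrow> a < int n \<Longrightarrow> c < int n \<Longrightarrow>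
    opE n h a c c = opE n (Suc h) a c c"
  by (auto simp: opE_def chain_op_def up_E_def down_E_def)

lemma opE_link_odd:
  "odd h \<Longrightarrow> h + 3 \<le> n \<Longrightarrow> 1 \<le> a \<Longrightarrow> 1 \<le> c \<Longrightarrow> a < int n \<Longrightarrow> c < int n \<Longrightarrow>
    opE n h a a c = opE n (Suc h) a a c"
  by (auto simp: opE_def chain_op_def up_E_def down_E_def)

lemma opE_pred_n_right:
  "even n \<Longrightarrow> 2 \<le> n \<Longrightarrow> 1 \<le> a \<Longrightarrow> 1 \<le> c \<Longrightarrow> a < int n \<Longrightarrow> c < int n \<Longrightarrow>
    opE n (n - Suc 0) a a c = c"
  by (auto simp: opE_def chain_op_def up_E_def down_E_def)

definition near :: "int \<Rightarrow> int \<Rightarrow> bool" where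
  "near i j \<longleftrightarrow> i \<le> j \<and> j \<le> i + 1"

lemma near_chain_op:
  "near a a' \<Longrightarrow> near c c' \<Longrightarrow> near m m' \<Longrightarrow> near p p' \<Longrightarrow> near (chain_op a c m p) (chain_op a' c' m' p')"
  unfolding near_def chain_op_def by (auto simp: max_def min_def)

lemma near_opV_opE:
  "near a a' \<Longrightarrow> near b b' \<Longrightarrow> near c c' \<Longrightarrow> near (opV n h a b c) (opE n h a' b' c')"
  unfolding opV_def opE_def
  by (intro near_chain_op) (auto simp: near_def up_V_def up_E_def down_V_def down_E_def)

lemma near_opV_opF: "near a a' \<Longrightarrow> near c c' \<Longrightarrow> near (opV n h a b c) (opF n h a' c')"
  unfolding opV_def opF_def
  by (intro near_chain_op) (auto simp: near_def up_V_def down_V_def)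

lemma near_opV_1:
  "0 \<le> a \<Longrightarrow> a < int n \<Longrightarrow> 0 \<le> b \<Longrightarrow> b < int n \<Longrightarrow> 0 \<le> c \<Longrightarrow> c < int n \<Longrightarrow>
    near a a' \<Longrightarrow> 1 \<le> a' \<Longrightarrow> a' < int n \<Longrightarrow> near (opV n (Suc 0) a b c) a'"
  unfolding near_def opV_def chain_op_def up_V_def down_V_def by auto

lemma near_opV_pred_n:
  "even n \<Longrightarrow> 2 \<le> n \<Longrightarrow> 0 \<le> a \<Longrightarrow> a < int n \<Longrightarrow> 0 \<le> b \<Longrightarrow> b < int n \<Longrightarrow> 0 \<le> c \<Longrightarrow> c < int n \<Longrightarrow>
    near c c' \<Longrightarrow> 1 \<le> c' \<Longrightarrow> c' < int n \<Longrightarrow> near (opV n (n - Suc 0) a b c) c'"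
  unfolding near_def opV_def chain_op_def up_V_def down_V_def by auto

datatype welem = A | B | F | V int | E int

fun in_W :: "nat \<Rightarrow> welem \<Rightarrow> bool" where
  "in_W n (V i) \<longleftrightarrow> 0 \<le> i \<and> i < int n"
| "in_W n (E j) \<longleftrightarrow> 1 \<le> j \<and> j < int n"
| "in_W n _ \<longleftrightarrow> True"

fun is_AB :: "welem \<Rightarrow> bool" where
  "is_AB A = True" | "is_AB B = True" | "is_AB _ = False"

fun is_V :: "welem \<Rightarrow> bool" where
  "is_V (V _) = True" | "is_V _ = False"

fun is_EF :: "welem \<Rightarrow> bool" where
  "is_EF F = True" | "is_EF (E _) = True" | "is_EF _ = False"

fun vidx :: "welem \<Rightarrow> int" where
  "vidx (V i) = i" | "vidx _ = 0"

fun eidx :: "welem \<Rightarrow> int" where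
  "eidx (E i) = i" | "eidx _ = 0"

definition ab_rule :: "nat \<Rightarrow> nat \<Rightarrow> welem \<Rightarrow> welem \<Rightarrow> welem \<Rightarrow> bool" where
  "ab_rule n h x y z \<longleftrightarrow>
     (x = A \<and> z = A \<and> (h \<noteq> 1 \<or> y = A)) \<or> (h = 1 \<and> x = A \<and> y = B \<and> z = B) \<or>
     (h = n - 1 \<and> x = B \<and> y = B \<and> z = A)"

definition wop :: "nat \<Rightarrow> nat \<Rightarrow> welem \<Rightarrow> welem \<Rightarrow> welem \<Rightarrow> welem" where
  "wop n h x y z =
   (if is_AB x \<and> is_AB y \<and> is_AB z then (if ab_rule n h x y z then A else B)
    else if is_V x \<and> is_V y \<and> is_V z then V (opV n h (vidx x) (vidx y) (vidx z))
    else if is_EF x \<and> is_EF y \<and> is_EF z then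
      (if x \<noteq> F \<and> y \<noteq> F \<and> z \<noteq> F then E (opE n h (eidx x) (eidx y) (eidx z))
       else if x \<noteq> F \<and> y = F \<and> z \<noteq> F then (if h = 1 then F else E (opF n h (eidx x) (eidx z)))
       else if x \<noteq> F \<and> y = F \<and> z = F then (if h = 1 then x else F)
       else if x = F \<and> y = F \<and> z \<noteq> F then (if h = n - 1 then z else F)
       else F)
    else if x = z then x else if y = x \<and> h = n - 1 then z else x)"

lemma wop_absorb: "h \<noteq> 1 \<Longrightarrow> wop n h x y x = x"
  by (cases x; cases y) (auto simp: wop_def ab_rule_def opV_def opE_def opF_def)

lemma wop_1_left: "in_W n x \<Longrightarrow> in_W n z \<Longrightarrow> wop n (Suc 0) x z z = x"
  by (cases x; cases z) (auto simp: wop_def ab_rule_def opV_1_left opE_1_left)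

lemma wop_link_even:
  "even h \<Longrightarrow> 2 \<le> h \<Longrightarrow> h + 2 \<le> n \<Longrightarrow> in_W n x \<Longrightarrow> in_W n z \<Longrightarrow> wop n h x z z = wop n (Suc h) x z z"
  by (cases x; cases z) (auto simp: wop_def ab_rule_def opV_link_even opE_link_even)

lemma wop_link_odd:
  "odd h \<Longrightarrow> h + 3 \<le> n \<Longrightarrow> in_W n x \<Longrightarrow> in_W n z \<Longrightarrow> wop n h x x z = wop n (Suc h) x x z"
  by (cases x; cases z) (auto simp: wop_def ab_rule_def opV_link_odd opE_link_odd)

lemma wop_pred_n_right:
  "even n \<Longrightarrow> 2 \<le> n \<Longrightarrow> in_W n x \<Longrightarrow> in_W n z \<Longrightarrow> wop n (n - Suc 0) x x z = z"
  by (cases x; cases z) (auto simp: wop_def ab_rule_def opV_pred_n_right opE_pred_n_right)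

lemma wop_in_W: "in_W n x \<Longrightarrow> in_W n y \<Longrightarrow> in_W n z \<Longrightarrow> in_W n (wop n h x y z)"
  by (cases x; cases y; cases z) (auto simp: wop_def opV_range opE_range opF_range)

section \<open>A compatible relation\<close>

definition W_rel :: "nat \<Rightarrow> welem \<Rightarrow> welem \<Rightarrow> welem \<Rightarrow> bool" where
  "W_rel n s v e \<longleftrightarrow>
     (s = A \<and> (\<exists>i j. v = V i \<and> e = E j \<and> 0 \<le> i \<and> i < int n \<and> 1 \<le> j \<and> j < int n \<and> near i j)) \<or>
     (s = B \<and> e = F \<and> (\<exists>i. v = V i \<and> 0 \<le> i \<and> i < int n))"

lemma W_rel_cases:
  assumes "W_rel n s v e"
  obtains (A) i j
    where "s = A" "v = V i" "e = E j" "0 \<le> i" "i < int n" "1 \<le> j" "j < int n" "near i j"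
  | (B) i where "s = B" "v = V i" "e = F" "0 \<le> i" "i < int n"
  using assms unfolding W_rel_def by blast

lemma W_rel_wop:
  assumes "W_rel n x1 x2 x3" "W_rel n y1 y2 y3" "W_rel n z1 z2 z3" "1 \<le> h" "h < n" "even n"
  shows "W_rel n (wop n h x1 y1 z1) (wop n h x2 y2 z2) (wop n h x3 y3 z3)"
proof -
  have "2 \<le> n" using assms(4-6) by presburger
  then show ?thesis
    using assms(1-3,6) by (elim W_rel_cases)
      (auto simp: wop_def ab_rule_def W_rel_def opV_range opE_range opF_range
        near_opV_opE near_opV_opF near_opV_1 near_opV_pred_n)
qed

section \<open>The variety generated by the witness algebra\<close>

definition ar3 :: "nat \<Rightarrow> nat" where
  "ar3 = (\<lambda>_. 3)"

text \<open>The symbol \<open>h\<close> denotes \<open>t\<^sub>h\<close> for \<open>1 \<le> h < n\<close> and the first projection otherwise.\<close>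
definition W_interp :: "nat \<Rightarrow> nat \<Rightarrow> welem list \<Rightarrow> welem" where
  "W_interp n f xs = (case xs of [x, y, z] \<Rightarrow> if 1 \<le> f \<and> f < n then wop n f x y z else x | _ \<Rightarrow> A)"

fun W_eval :: "nat \<Rightarrow> (nat \<Rightarrow> welem) \<Rightarrow> nat trm \<Rightarrow> welem" where
  "W_eval n \<rho> (Var i) = \<rho> i"
| "W_eval n \<rho> (Fun f ts) = W_interp n f (map (W_eval n \<rho>) ts)"

definition W_identities :: "nat \<Rightarrow> (nat trm \<times> nat trm) set" where
  "W_identities n = {(s, u). wf_trm ar3 s \<and> wf_trm ar3 u \<and>
     (\<forall>\<rho>. (\<forall>i. in_W n (\<rho> i)) \<longrightarrow> W_eval n \<rho> s = W_eval n \<rho> u)}"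

lemma W_eval_in_W: "(\<And>i. in_W n (\<rho> i)) \<Longrightarrow> in_W n (W_eval n \<rho> u)"
  by (induction u) (auto simp: W_interp_def wop_in_W split: list.split)

lemma W_eval_subst: "W_eval n \<rho> (subst \<sigma> u) = W_eval n (\<lambda>i. W_eval n \<rho> (\<sigma> i)) u"
  by (induction u) (simp_all add: comp_def cong: map_cong)

lemma W_eval_cong: "(\<And>i. i \<in> vars_trm u \<Longrightarrow> \<rho> i = \<rho>' i) \<Longrightarrow> W_eval n \<rho> u = W_eval n \<rho>' u"
proof (induction u)
  case (Fun f ts)
  then have "map (W_eval n \<rho>) ts = map (W_eval n \<rho>') ts" by auto
  then show ?case by (simp del: map_eq_conv)
qed simp

lemma W_eval_app4:
  "W_eval n \<rho> (app4 U a b c d) =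
     W_eval n (args4 (W_eval n \<rho> a) (W_eval n \<rho> b) (W_eval n \<rho> c) (W_eval n \<rho> d)) U"
  unfolding app4_eq_subst W_eval_subst
  by (auto simp: args4_def intro!: arg_cong[where f="\<lambda>\<rho>. W_eval n \<rho> U"])

lemma W_eval_eqc:
  assumes "eqc ar3 (W_identities n) s u" "\<And>i. in_W n (\<rho> i)"
  shows "W_eval n \<rho> s = W_eval n \<rho> u"
  using assms
proof (induction arbitrary: \<rho> rule: eqc.induct)
  case (ax s u \<sigma>)
  then show ?case by (simp add: W_eval_subst W_identities_def W_eval_in_W)
next
  case (cong ss f ts)
  then have "map (W_eval n \<rho>) ss = map (W_eval n \<rho>) ts" by (auto intro: nth_equalityI)
  then show ?case by simp
qed auto

lemma eqc_W_identities_iff: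
  assumes "wf_trm ar3 s" "wf_trm ar3 u"
  shows "eqc ar3 (W_identities n) s u \<longleftrightarrow> (\<forall>\<rho>. (\<forall>i. in_W n (\<rho> i)) \<longrightarrow> W_eval n \<rho> s = W_eval n \<rho> u)"
proof
  assume "\<forall>\<rho>. (\<forall>i. in_W n (\<rho> i)) \<longrightarrow> W_eval n \<rho> s = W_eval n \<rho> u"
  with assms have "(s, u) \<in> W_identities n" by (simp add: W_identities_def)
  from eqc.ax[OF this, where \<sigma> = Var] show "eqc ar3 (W_identities n) s u" by (simp add: subst_Var)
qed (auto intro: W_eval_eqc)

lemma equational_theory_W_identities: "equational_theory ar3 (W_identities n)"
  by (auto simp: equational_theory_def W_identities_def)

lemma finite_in_W: "finite {x. in_W n x}"
proof -
  have "{x. in_W n x} \<subseteq> {A, B, F} \<union> V ` {0..<int n} \<union> E ` {1..<int n}"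
    by (auto elim: in_W.elims)
  then show ?thesis by (rule finite_subset) auto
qed

lemma eqc_W_identities_iff_tuples:
  assumes s: "kary ar3 k s" and u: "kary ar3 k u"
  shows "eqc ar3 (W_identities n) s u \<longleftrightarrow>
    (\<forall>xs. set xs \<subseteq> {x. in_W n x} \<and> length xs = k \<longrightarrow>
      W_eval n (\<lambda>i. if i < k then xs ! i else A) s = W_eval n (\<lambda>i. if i < k then xs ! i else A) u)"
    (is "_ \<longleftrightarrow> (\<forall>xs. ?tuple xs \<longrightarrow> W_eval n (?val xs) s = W_eval n (?val xs) u)")
proof
  assume eqc: "eqc ar3 (W_identities n) s u"
  show "\<forall>xs. ?tuple xs \<longrightarrow> W_eval n (?val xs) s = W_eval n (?val xs) u"
  proof (intro allI impI)
    fix xs assume "?tuple xs"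
    then have "in_W n (?val xs i)" for i by (auto dest!: nth_mem)
    then show "W_eval n (?val xs) s = W_eval n (?val xs) u" by (rule W_eval_eqc[OF eqc])
  qed
next
  assume tuples: "\<forall>xs. ?tuple xs \<longrightarrow> W_eval n (?val xs) s = W_eval n (?val xs) u"
  have "W_eval n \<rho> s = W_eval n \<rho> u" if \<rho>: "\<forall>i. in_W n (\<rho> i)" for \<rho>
  proof -
    define xs where "xs = map \<rho> [0..<k]"
    have restrict: "W_eval n \<rho> w = W_eval n (?val xs) w" if "kary ar3 k w" for w
      using that by (intro W_eval_cong) (auto simp: kary_def xs_def)
    have "?tuple xs" using \<rho> by (auto simp: xs_def)
    then show ?thesis using tuples restrict[OF s] restrict[OF u] by simp
  qed
  then show "eqc ar3 (W_identities n) s u"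
    using s u by (simp add: eqc_W_identities_iff kary_def)
qed

lemma locally_finite_W_identities: "locally_finite ar3 (W_identities n)"
  unfolding locally_finite_def
proof
  fix k
  define D where "D = {x. in_W n x}"
  define L where "L = {xs. set xs \<subseteq> D \<and> length xs = k}"
  define sem where
    "sem s = (\<lambda>xs. if xs \<in> L then W_eval n (\<lambda>i. if i < k then xs ! i else A) s else undefined)" for s
  have eqc_iff_sem: "eqc ar3 (W_identities n) s u \<longleftrightarrow> sem s = sem u"
    if "kary ar3 k s" "kary ar3 k u" for s u
    unfolding eqc_W_identities_iff_tuples[OF that] by (auto simp: sem_def L_def D_def fun_eq_iff)
  have "(\<lambda>t. {s. kary ar3 k s \<and> eqc ar3 (W_identities n) s t}) ` {t. kary ar3 k t}
      \<subseteq> (\<lambda>g. {s. kary ar3 k s \<and> sem s = g}) ` (L \<rightarrow>\<^sub>E D)"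
  proof
    fix X assume "X \<in> (\<lambda>t. {s. kary ar3 k s \<and> eqc ar3 (W_identities n) s t}) ` {t. kary ar3 k t}"
    then obtain t where t: "kary ar3 k t" and X: "X = {s. kary ar3 k s \<and> eqc ar3 (W_identities n) s t}"
      by auto
    have "X = {s. kary ar3 k s \<and> sem s = sem t}" unfolding X using eqc_iff_sem t by auto
    moreover have "sem t \<in> L \<rightarrow>\<^sub>E D"
      unfolding sem_def by (rule PiE_I) (auto simp: L_def D_def intro!: W_eval_in_W dest!: nth_mem)
    ultimately show "X \<in> (\<lambda>g. {s. kary ar3 k s \<and> sem s = g}) ` (L \<rightarrow>\<^sub>E D)" by blast
  qed
  moreover have "finite (L \<rightarrow>\<^sub>E D)"
    using finite_in_W finite_lists_length_eq[OF finite_in_W]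
    by (auto simp: L_def D_def intro: finite_PiE)
  ultimately show "finite ((\<lambda>t. {s. kary ar3 k s \<and> eqc ar3 (W_identities n) s t}) ` {t. kary ar3 k t})"
    by (meson finite_imageI finite_subset)
qed

definition gumm_trm :: "nat \<Rightarrow> nat \<Rightarrow> nat trm" where
  "gumm_trm n h = (if h = 0 then vx else if h = n then vz else Fun h [vx, vy, vz])"

definition gumm_op :: "nat \<Rightarrow> nat \<Rightarrow> welem \<Rightarrow> welem \<Rightarrow> welem \<Rightarrow> welem" where
  "gumm_op n h x y z = (if h = 0 then x else if h = n then z else wop n h x y z)"

lemma W_eval_gumm_trm:
  "h \<le> n \<Longrightarrow> W_eval n \<rho> (app3 (gumm_trm n h) a b c) =
     gumm_op n h (W_eval n \<rho> a) (W_eval n \<rho> b) (W_eval n \<rho> c)"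
  by (simp add: gumm_trm_def gumm_op_def app3_def W_interp_def)

lemma gumm_op_absorb: "h \<noteq> 1 \<Longrightarrow> gumm_op n h x y x = x"
  by (simp add: gumm_op_def wop_absorb)

lemma gumm_op_link_even:
  assumes "even n" "h < n" "even h" "in_W n x" "in_W n z"
  shows "gumm_op n h x z z = gumm_op n (Suc h) x z z"
proof (cases "h = 0")
  case True
  then show ?thesis using assms by (auto simp: gumm_op_def wop_1_left)
next
  case False
  then have "2 \<le> h" "h + 2 \<le> n" using assms(1-3) by presburger+
  then show ?thesis using assms by (simp add: gumm_op_def wop_link_even)
qed

lemma gumm_op_link_odd:
  assumes "even n" "h < n" "odd h" "in_W n x" "in_W n z"
  shows "gumm_op n h x x z = gumm_op n (Suc h) x x z"
proof (cases "Suc h = n")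
  case True
  then show ?thesis using assms wop_pred_n_right[of n x z] by (auto simp: gumm_op_def)
next
  case False
  then have "h + 3 \<le> n" "h \<noteq> 0" using assms(1-3) by presburger+
  then show ?thesis using assms by (simp add: gumm_op_def wop_link_odd)
qed

lemma W_gumm_terms:
  assumes "even n" "2 \<le> n"
  shows "alvin_terms_except ar3 (W_identities n) n {1} (gumm_trm n)"
proof -
  have kary: "kary ar3 3 (gumm_trm n h)" for h
    by (auto simp: gumm_trm_def kary_def ar3_def)
  then have wf: "wf_trm ar3 (app3 (gumm_trm n h) a b c)"
    if "a \<in> {vx, vy, vz}" "b \<in> {vx, vy, vz}" "c \<in> {vx, vy, vz}" for h a b c
    using that kary_app3[OF kary, of 3 a b c] by (auto simp: kary_def)
  show ?thesis
    unfolding alvin_terms_except_def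
    using assms kary
    by (simp add: eqc_W_identities_iff wf W_eval_gumm_trm gumm_op_absorb gumm_op_link_even
        gumm_op_link_odd) (simp add: gumm_op_def)
qed

lemma W_rel_W_eval:
  assumes "even n" "2 \<le> n" "wf_trm ar3 U" "\<And>i. W_rel n (\<rho>1 i) (\<rho>2 i) (\<rho>3 i)"
  shows "W_rel n (W_eval n \<rho>1 U) (W_eval n \<rho>2 U) (W_eval n \<rho>3 U)"
  using assms(3)
proof (induction U)
  case (Fun f ts)
  then obtain a b c where "ts = [a, b, c]"
    by (auto simp: ar3_def numeral_3_eq_3 length_Suc_conv)
  with Fun show ?case
    using assms(1,2,4) by (auto simp: W_interp_def intro!: W_rel_wop)
qed (simp add: assms(4))

lemma alternating_climb:
  fixes i j :: "nat \<Rightarrow> int"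
  assumes "i 0 = 0" "j 0 = 1" "\<And>k. k \<le> m \<Longrightarrow> near (i k) (j k)"
    and "\<And>k. k < m \<Longrightarrow> even k \<Longrightarrow> i (Suc k) = i k"
    and "\<And>k. k < m \<Longrightarrow> odd k \<Longrightarrow> j (Suc k) = j k"
  shows "k \<le> m \<Longrightarrow>
    2 * i k + of_bool (odd k) \<le> int k \<and> 2 * j k + of_bool (odd k) \<le> int k + 2"
proof (induction k)
  case (Suc k)
  then have "near (i (Suc k)) (j (Suc k))" using assms(3) by blast
  with Suc assms(4,5)[of k] show ?case by (cases "even k") (auto simp: near_def)
qed (simp add: assms(1,2))

lemma W_not_modular:
  assumes "even n" "2 \<le> n"
  shows "\<not> modular ar3 (W_identities n) (2 * n - 3)"
proof
  define m where "m = 2 * n - 3"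
  assume "modular ar3 (W_identities n) (2 * n - 3)"
  then obtain u where day: "day_terms ar3 (W_identities n) False m u"
    by (auto simp: modular_def m_def)
  define \<rho>1 where "\<rho>1 = args4 A B B A"
  define \<rho>2 where "\<rho>2 = args4 (V 0) (V 0) (V (int n - 1)) (V (int n - 1))"
  define \<rho>3 where "\<rho>3 = args4 (E 1) F F (E (int n - 1))"
  have "\<And>i. in_W n (\<rho>1 i)" "\<And>i. in_W n (\<rho>2 i)" "\<And>i. in_W n (\<rho>3 i)"
    using assms by (auto simp: \<rho>1_def \<rho>2_def \<rho>3_def args4_def)
  note eval = W_eval_eqc[where \<rho> = \<rho>1, OF _ this(1)] W_eval_eqc[where \<rho> = \<rho>2, OF _ this(2)]
    W_eval_eqc[where \<rho> = \<rho>3, OF _ this(3)]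
  define i where "i k = vidx (W_eval n \<rho>2 (u k))" for k
  define j where "j k = eidx (W_eval n \<rho>3 (u k))" for k
  have "near (i k) (j k)" if "k \<le> m" for k
  proof -
    have "W_eval n \<rho>1 (u k) = A"
      using eval(1)[of "app4 (u k) vx vy vy vx" vx] day that
      by (simp add: day_terms_def W_eval_app4 \<rho>1_def args4_def)
    moreover have "W_rel n (W_eval n \<rho>1 (u k)) (W_eval n \<rho>2 (u k)) (W_eval n \<rho>3 (u k))"
      using day that assms
      by (intro W_rel_W_eval)
        (auto simp: day_terms_def kary_def \<rho>1_def \<rho>2_def \<rho>3_def args4_def W_rel_def near_def)
    ultimately show ?thesis by (auto simp: W_rel_def i_def j_def)
  qed
  moreover have "i 0 = 0" "j 0 = 1" "i m = int n - 1"
    using eval(2)[of "app4 (u 0) vx vy vz vw" vx] eval(3)[of "app4 (u 0) vx vy vz vw" vx]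
      eval(2)[of "app4 (u m) vx vy vz vw" vw] day
    by (simp_all add: day_terms_def W_eval_app4 i_def j_def \<rho>2_def \<rho>3_def args4_def)
  moreover have "i (Suc k) = i k" if "k < m" "even k" for k
    using eval(2)[of "app4 (u k) vx vx vw vw" "app4 (u (Suc k)) vx vx vw vw"] day that
    by (simp add: day_terms_def W_eval_app4 i_def \<rho>2_def args4_def)
  moreover have "j (Suc k) = j k" if "k < m" "odd k" for k
    using eval(3)[of "app4 (u k) vx vy vy vw" "app4 (u (Suc k)) vx vy vy vw"] day that
    by (simp add: day_terms_def W_eval_app4 j_def \<rho>3_def args4_def)
  ultimately have "2 * i m + of_bool (odd m) \<le> int m"
    using alternating_climb[of i j m m] by blast
  moreover have "odd m" "int m = 2 * int n - 3" using assms by (simp_all add: m_def)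
  ultimately show False using \<open>i m = int n - 1\<close> by simp
qed

theorem proposition6p5:
  shows "(\<forall>(ar :: 'f \<Rightarrow> nat) \<Sigma> n.
            equational_theory ar \<Sigma> \<longrightarrow> even n \<longrightarrow> n \<ge> 4 \<longrightarrow>
            (n_gumm ar \<Sigma> n \<or> dd_alvin ar \<Sigma> n) \<longrightarrow>
            reversed_modular ar \<Sigma> (2 * n - 3) \<and> modular ar \<Sigma> (2 * n - 2))
       \<and> (\<forall>n. even n \<and> n \<ge> 2 \<longrightarrow>
            (\<exists>(ar :: nat \<Rightarrow> nat) \<Sigma>. equational_theory ar \<Sigma> \<and> locally_finite ar \<Sigma> \<and>
               dd_alvin ar \<Sigma> n \<and> n_gumm ar \<Sigma> n \<and> \<not> modular ar \<Sigma> (2 * n - 3)))"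
proof (intro conjI allI impI)
  fix ar :: "'f \<Rightarrow> nat" and \<Sigma> n
  assume "even n" "n \<ge> 4" "n_gumm ar \<Sigma> n \<or> dd_alvin ar \<Sigma> n"
  then show rev: "reversed_modular ar \<Sigma> (2 * n - 3)"
    using dd_alvin_imp_reversed_modular n_gumm_imp_dd_alvin by blast
  have "Suc (2 * n - 3) = 2 * n - 2" using \<open>n \<ge> 4\<close> by simp
  with reversed_modular_imp_modular[OF rev] show "modular ar \<Sigma> (2 * n - 2)" by simp
next
  fix n :: nat
  assume n: "even n \<and> n \<ge> 2"
  then have "n_gumm ar3 (W_identities n) n"
    using W_gumm_terms by (auto simp: n_gumm_def)
  with n show "\<exists>(ar :: nat \<Rightarrow> nat) \<Sigma>. equational_theory ar \<Sigma> \<and> locally_finite ar \<Sigma> \<and>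
      dd_alvin ar \<Sigma> n \<and> n_gumm ar \<Sigma> n \<and> \<not> modular ar \<Sigma> (2 * n - 3)"
    using equational_theory_W_identities locally_finite_W_identities W_not_modular n_gumm_imp_dd_alvin
    by blast
qed

end
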